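(* For every $n\geq 8$ with $n\equiv 0,2,8$ or $10 \pmod{16}$, there exists an almost 2-perfect maximum 8-cycle packing of $K_n$.
   Context: An 8-cycle packing of $K_n$ on vertex set $\mathcal{X}$ is a triple $(\mathcal{X},\mathcal{C},\mathcal{L})$ with $\mathcal{C}$ a collection of pairwise edge-disjoint 8-cycles of $K_n$ and leave $\mathcal{L}$ the set of edges in no cycle of $\mathcal{C}$; it is maximum if $|\mathcal{L}|$ is minimum among all 8-cycle packings of $K_n$. For an 8-cycle $C$, an inside 8-cycle of $C$ is an 8-cycle on the same vertex set sharing no edge with $C$. The packing is almost 2-perfect if one can choose for each $C\in\mathcal{C}$ an inside 8-cycle $C'$ such that $(\mathcal{X},\{C'\},\mathcal{L})$ is again an 8-cycle packing with the same leave. *)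

theory Defs
  imports Main
begin

definition complete_edges :: "'a set \<Rightarrow> 'a set set" where
  "complete_edges X = {e. e \<subseteq> X \<and> card e = 2}"

definition cycle_edges :: "'a list \<Rightarrow> 'a set set" where
  "cycle_edges vs = {{vs ! i, vs ! ((i + 1) mod length vs)} | i. i < length vs}"

definition is_8cycle :: "'a set \<Rightarrow> 'a set set \<Rightarrow> bool" where
  "is_8cycle X C \<longleftrightarrow>
     (\<exists>vs. length vs = 8 \<and> distinct vs \<and> set vs \<subseteq> X \<and> C = cycle_edges vs)"

definition is_8cycle_packing :: "'a set \<Rightarrow> 'a set set set \<Rightarrow> 'a set set \<Rightarrow> bool" where
  "is_8cycle_packing X Cs L \<longleftrightarrow>
     (\<forall>C\<in>Cs. is_8cycle X C) \<and>
     (\<forall>C1\<in>Cs. \<forall>C2\<in>Cs. C1 \<noteq> C2 \<longrightarrow> C1 \<inter> C2 = {}) \<and>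
     L = complete_edges X - \<Union>Cs"

definition is_maximum_8cycle_packing :: "'a set \<Rightarrow> 'a set set set \<Rightarrow> 'a set set \<Rightarrow> bool" where
  "is_maximum_8cycle_packing X Cs L \<longleftrightarrow>
     is_8cycle_packing X Cs L \<and>
     (\<forall>Cs' L'. is_8cycle_packing X Cs' L' \<longrightarrow> card L \<le> card L')"

definition inside_8cycle :: "'a set \<Rightarrow> 'a set set \<Rightarrow> 'a set set \<Rightarrow> bool" where
  "inside_8cycle X C C' \<longleftrightarrow> is_8cycle X C' \<and> \<Union>C' = \<Union>C \<and> C \<inter> C' = {}"

definition almost_2_perfect :: "'a set \<Rightarrow> 'a set set set \<Rightarrow> 'a set set \<Rightarrow> bool" where
  "almost_2_perfect X Cs L \<longleftrightarrow>
     is_8cycle_packing X Cs L \<and>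
     (\<exists>f. (\<forall>C\<in>Cs. inside_8cycle X C (f C)) \<and> is_8cycle_packing X (f ` Cs) L)"

end

theory Submission
  imports Defs "HOL-Library.Disjoint_Sets"
begin

text \<open>
  The leave is the perfect matching of the pairs {2k, 2k+1}. Every vertex of K_n has odd degree
  n - 1 while an 8-cycle meets a vertex in an even number of edges, so the leave of any packing
  covers every vertex and has at least n/2 edges: the packing is maximum.

  Write n = 8m + r with r \<in> {0, 2}. The vertices below 8m form octets {8i, ..., 8i+7}, each split
  into two quads of four; the r remaining vertices are attached to every octet. The non-leave edges
  then split into blocks: for each octet, a copy of K_(8+r) minus the matching on the octet and the
  extra vertices, and for two quads in different octets, the K_(4,4) between them. Each block is
  covered by a relabelled copy of a fixed template, a list of 8-cycles C, each paired with an inside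
  8-cycle D, such that the C's and the D's are both edge-disjoint decompositions of the block. The
  templates for K_8, K_10 and K_(4,4) are verified by evaluation.
\<close>

lemma cycle_edges_conv_map:
  "cycle_edges vs = set (map (\<lambda>i. {vs ! i, vs ! ((i + 1) mod length vs)}) [0..<length vs])"
  unfolding cycle_edges_def by auto

definition edge_image :: "('a \<Rightarrow> 'b) \<Rightarrow> 'a set set \<Rightarrow> 'b set set" where
  "edge_image f E = (`) f ` E"

lemma edge_image_doubletons: "edge_image f {{x, y} | x y. P x y} = {{f x, f y} | x y. P x y}"
  unfolding edge_image_def by (auto simp: image_iff) (metis image_empty image_insert)

lemma Union_edge_image: "\<Union>(edge_image f E) = f ` \<Union>E"
  unfolding edge_image_def by auto

lemma edge_image_Union: "edge_image f (\<Union>A) = \<Union>(edge_image f ` A)"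
  unfolding edge_image_def by auto

lemma edge_image_Int:
  assumes "inj_on f V" "E \<subseteq> Pow V" "F \<subseteq> Pow V"
  shows "edge_image f E \<inter> edge_image f F = edge_image f (E \<inter> F)"
  unfolding edge_image_def using inj_on_image_Int[OF inj_on_image_Pow[OF assms(1)] assms(2,3)] by simp

lemma cycle_edges_map: "cycle_edges (map f vs) = edge_image f (cycle_edges vs)"
proof -
  have "(i + 1) mod length vs < length vs" if "i < length vs" for i
    using that by (metis mod_less_divisor not_less_zero gr0I)
  then have "cycle_edges (map f vs) = (\<lambda>i. f ` {vs ! i, vs ! ((i + 1) mod length vs)}) ` {0..<length vs}"
    unfolding cycle_edges_conv_map by (auto intro!: image_cong)
  then show ?thesis by (simp add: cycle_edges_conv_map[of vs] edge_image_def image_image)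
qed

lemma Union_cycle_edges:
  assumes "vs \<noteq> []"
  shows "\<Union>(cycle_edges vs) = set vs"
proof
  show "\<Union>(cycle_edges vs) \<subseteq> set vs"
    unfolding cycle_edges_def using assms by auto
  show "set vs \<subseteq> \<Union>(cycle_edges vs)"
  proof
    fix x assume "x \<in> set vs"
    then obtain i where "i < length vs" "vs ! i = x" by (auto simp: in_set_conv_nth)
    then show "x \<in> \<Union>(cycle_edges vs)" unfolding cycle_edges_def by blast
  qed
qed

lemma is_8cycle_nonempty: "is_8cycle X C \<Longrightarrow> C \<noteq> {}"
  unfolding is_8cycle_def cycle_edges_def by fastforce

lemma is_8cycle_subset_complete_edges:
  assumes "is_8cycle X C"
  shows "C \<subseteq> complete_edges X"
proof
  fix e assume "e \<in> C"
  with assms obtain vs i where vs: "length vs = 8" "distinct vs" "set vs \<subseteq> X" "i < 8"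
    and e: "e = {vs ! i, vs ! ((i + 1) mod 8)}"
    unfolding is_8cycle_def cycle_edges_def by auto
  have "(i + 1) mod 8 \<noteq> i" "(i + 1) mod 8 < 8" using vs(4) by presburger+
  then have "vs ! i \<noteq> vs ! ((i + 1) mod 8)" using vs by (simp add: nth_eq_iff_index_eq)
  then show "e \<in> complete_edges X"
    using vs e nth_mem unfolding complete_edges_def by fastforce
qed

lemma is_8cycle_edge_image:
  assumes "is_8cycle V C" "inj_on f V" "f ` V \<subseteq> X"
  shows "is_8cycle X (edge_image f C)"
proof -
  obtain vs where vs: "length vs = 8" "distinct vs" "set vs \<subseteq> V" "C = cycle_edges vs"
    using assms(1) unfolding is_8cycle_def by blast
  have "distinct (map f vs)" using vs(2,3) assms(2) by (simp add: distinct_map inj_on_subset)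
  with vs assms(3) show ?thesis
    unfolding is_8cycle_def by (intro exI[of _ "map f vs"]) (auto simp: cycle_edges_map)
qed

lemma even_card_edges_at_8cycle:
  assumes "is_8cycle X C"
  shows "even (card {e \<in> C. v \<in> e})"
proof -
  obtain vs where vs: "length vs = 8" "distinct vs" "C = cycle_edges vs"
    using assms unfolding is_8cycle_def by blast
  then obtain a0 a1 a2 a3 a4 a5 a6 a7 where as: "vs = [a0, a1, a2, a3, a4, a5, a6, a7]"
    by (auto simp: numeral_eq_Suc length_Suc_conv)
  let ?es = "[{a0, a1}, {a1, a2}, {a2, a3}, {a3, a4}, {a4, a5}, {a5, a6}, {a6, a7}, {a7, a0}]"
  have C: "C = set ?es" using vs(3) by (simp add: as cycle_edges_conv_map upt_rec)
  have "distinct ?es" using vs(2) by (auto simp: as doubleton_eq_iff)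
  then have card: "card {e \<in> C. v \<in> e} = length (filter (\<lambda>e. v \<in> e) ?es)"
    unfolding C set_filter[symmetric] by (rule distinct_card[OF distinct_filter])
  consider "v = a0" | "v = a1" | "v = a2" | "v = a3" | "v = a4" | "v = a5" | "v = a6" | "v = a7"
    | "v \<notin> set vs" by (auto simp: as)
  then show ?thesis unfolding card using vs(2) by cases (auto simp: as)
qed

lemma finite_complete_edges: "finite X \<Longrightarrow> finite (complete_edges X)"
  unfolding complete_edges_def by (rule finite_subset[of _ "Pow X"]) auto

lemma card_complete_edges_at:
  assumes "finite X" "v \<in> X"
  shows "card {e \<in> complete_edges X. v \<in> e} = card X - 1"
proof -
  have "{e \<in> complete_edges X. v \<in> e} = (\<lambda>u. {u, v}) ` (X - {v})"
  proof (intro set_eqI iffI)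
    fix e assume "e \<in> {e \<in> complete_edges X. v \<in> e}"
    then have "card e = 2" "e \<subseteq> X" "v \<in> e" unfolding complete_edges_def by auto
    then obtain u where "u \<in> e" "u \<noteq> v" "e = {u, v}"
      by (metis card_2_iff doubleton_eq_iff insert_iff singletonD)
    then show "e \<in> (\<lambda>u. {u, v}) ` (X - {v})" using \<open>e \<subseteq> X\<close> by blast
  next
    fix e assume "e \<in> (\<lambda>u. {u, v}) ` (X - {v})"
    then show "e \<in> {e \<in> complete_edges X. v \<in> e}"
      using assms(2) unfolding complete_edges_def by auto
  qed
  moreover have "inj_on (\<lambda>u. {u, v}) (X - {v})"
    by (auto simp: inj_on_def doubleton_eq_iff)
  ultimately show ?thesis using assms by (simp add: card_image)
qed

lemma leave_covers_vertex:
  assumes P: "is_8cycle_packing X Cs L" and X: "finite X" "even (card X)" and v: "v \<in> X"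
  shows "\<exists>e\<in>L. v \<in> e"
proof (rule ccontr)
  assume no: "\<not> (\<exists>e\<in>L. v \<in> e)"
  let ?K = "complete_edges X"
  have cyc: "\<And>C. C \<in> Cs \<Longrightarrow> is_8cycle X C"
    and disj: "\<And>C1 C2. C1 \<in> Cs \<Longrightarrow> C2 \<in> Cs \<Longrightarrow> C1 \<noteq> C2 \<Longrightarrow> C1 \<inter> C2 = {}"
    and L: "L = ?K - \<Union>Cs" using P unfolding is_8cycle_packing_def by auto
  have K: "finite ?K" using X(1) by (rule finite_complete_edges)
  have Cs: "Cs \<subseteq> Pow ?K" using cyc is_8cycle_subset_complete_edges by blast
  then have "finite Cs" using K by (meson finite_Pow_iff finite_subset)
  have "{e \<in> ?K. v \<in> e} = (\<Union>C\<in>Cs. {e \<in> C. v \<in> e})" using no L Cs by blast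
  also have "card \<dots> = (\<Sum>C\<in>Cs. card {e \<in> C. v \<in> e})"
  proof (rule card_UN_disjoint[OF \<open>finite Cs\<close>])
    show "\<forall>C\<in>Cs. finite {e \<in> C. v \<in> e}" using Cs K by (auto intro: finite_subset)
    show "\<forall>C1\<in>Cs. \<forall>C2\<in>Cs. C1 \<noteq> C2 \<longrightarrow> {e \<in> C1. v \<in> e} \<inter> {e \<in> C2. v \<in> e} = {}"
      using disj by blast
  qed
  finally have "card {e \<in> ?K. v \<in> e} = (\<Sum>C\<in>Cs. card {e \<in> C. v \<in> e})" .
  moreover have "even (\<Sum>C\<in>Cs. card {e \<in> C. v \<in> e})"
    by (intro dvd_sum even_card_edges_at_8cycle[OF cyc])
  ultimately have "even (card X - 1)" using card_complete_edges_at[OF X(1) v] by simp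
  moreover have "card X \<noteq> 0" using X(1) v by auto
  ultimately show False using X(2) by presburger
qed

lemma card_le_twice_card_leave:
  assumes P: "is_8cycle_packing X Cs L" and X: "finite X" "even (card X)"
  shows "card X \<le> 2 * card L"
proof -
  have L: "L \<subseteq> complete_edges X" using P unfolding is_8cycle_packing_def by auto
  then have "finite L" using finite_complete_edges[OF X(1)] by (rule finite_subset)
  have "X = \<Union>L"
    using leave_covers_vertex[OF P X] L unfolding complete_edges_def by blast
  then have "card X \<le> (\<Sum>e\<in>L. card e)" by (simp add: card_Union_le_sum_card)
  also have "\<dots> = (\<Sum>e\<in>L. 2)" using L unfolding complete_edges_def by (intro sum.cong) auto
  also have "\<dots> = 2 * card L" by simp
  finally show ?thesis .
qed

definition paired_decomposition :: "'a set \<Rightarrow> ('a set set \<times> 'a set set) set \<Rightarrow> 'a set set \<Rightarrow> bool" where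
  "paired_decomposition X P E \<longleftrightarrow>
     (\<forall>C D. (C, D) \<in> P \<longrightarrow> is_8cycle X C \<and> inside_8cycle X C D) \<and>
     (\<forall>p\<in>P. \<forall>q\<in>P. p \<noteq> q \<longrightarrow> fst p \<inter> fst q = {} \<and> snd p \<inter> snd q = {}) \<and>
     \<Union>(fst ` P) = E \<and> \<Union>(snd ` P) = E"

lemma paired_decompositionD:
  assumes "paired_decomposition X P E"
  shows paired_decomposition_cycle: "(C, D) \<in> P \<Longrightarrow> is_8cycle X C"
    and paired_decomposition_inside: "(C, D) \<in> P \<Longrightarrow> inside_8cycle X C D"
    and paired_decomposition_disjoint:
      "p \<in> P \<Longrightarrow> q \<in> P \<Longrightarrow> p \<noteq> q \<Longrightarrow> fst p \<inter> fst q = {} \<and> snd p \<inter> snd q = {}"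
    and paired_decomposition_Union_fst: "\<Union>(fst ` P) = E"
    and paired_decomposition_Union_snd: "\<Union>(snd ` P) = E"
  using assms unfolding paired_decomposition_def by auto

lemma paired_decompositionI:
  assumes "\<And>C D. (C, D) \<in> P \<Longrightarrow> is_8cycle X C \<and> inside_8cycle X C D"
    and "\<And>p q. p \<in> P \<Longrightarrow> q \<in> P \<Longrightarrow> p \<noteq> q \<Longrightarrow> fst p \<inter> fst q = {} \<and> snd p \<inter> snd q = {}"
    and "\<Union>(fst ` P) = E" "\<Union>(snd ` P) = E"
  shows "paired_decomposition X P E"
  using assms unfolding paired_decomposition_def by blast

lemma paired_decomposition_UN:
  assumes P: "\<And>b. b \<in> B \<Longrightarrow> paired_decomposition X (P b) (E b)" and E: "disjoint_family_on E B"
  shows "paired_decomposition X (\<Union>b\<in>B. P b) (\<Union>b\<in>B. E b)"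
proof (rule paired_decompositionI)
  show "is_8cycle X C \<and> inside_8cycle X C D" if "(C, D) \<in> (\<Union>b\<in>B. P b)" for C D
    using that P paired_decompositionD by blast
  show "fst p \<inter> fst q = {} \<and> snd p \<inter> snd q = {}"
    if p: "p \<in> (\<Union>b\<in>B. P b)" and q: "q \<in> (\<Union>b\<in>B. P b)" and "p \<noteq> q" for p q
  proof -
    obtain b b' where b: "b \<in> B" "p \<in> P b" and b': "b' \<in> B" "q \<in> P b'" using p q by blast
    show ?thesis
    proof (cases "b = b'")
      case True
      with b b' \<open>p \<noteq> q\<close> show ?thesis using paired_decomposition_disjoint[OF P] by blast
    next
      case False
      have "fst p \<subseteq> E b" "snd p \<subseteq> E b" "fst q \<subseteq> E b'" "snd q \<subseteq> E b'"
        using b b' paired_decomposition_Union_fst[OF P] paired_decomposition_Union_snd[OF P] by blast+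
      with E b(1) b'(1) False show ?thesis unfolding disjoint_family_on_def by blast
    qed
  qed
  have "\<Union>(fst ` (\<Union>b\<in>B. P b)) = (\<Union>b\<in>B. \<Union>(fst ` P b))"
    "\<Union>(snd ` (\<Union>b\<in>B. P b)) = (\<Union>b\<in>B. \<Union>(snd ` P b))" by blast+
  then show "\<Union>(fst ` (\<Union>b\<in>B. P b)) = (\<Union>b\<in>B. E b)" "\<Union>(snd ` (\<Union>b\<in>B. P b)) = (\<Union>b\<in>B. E b)"
    using paired_decomposition_Union_fst[OF P] paired_decomposition_Union_snd[OF P] by simp_all
qed

lemma paired_decomposition_edge_image:
  assumes P: "paired_decomposition V P E" and f: "inj_on f V" "f ` V \<subseteq> X"
  shows "paired_decomposition X (map_prod (edge_image f) (edge_image f) ` P) (edge_image f E)"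
proof -
  have Pow: "C \<subseteq> Pow V" "D \<subseteq> Pow V" if "(C, D) \<in> P" for C D
    using paired_decomposition_cycle[OF P that] paired_decomposition_inside[OF P that]
      is_8cycle_subset_complete_edges unfolding inside_8cycle_def complete_edges_def by blast+
  show ?thesis
  proof (rule paired_decompositionI)
    fix C' D' assume "(C', D') \<in> map_prod (edge_image f) (edge_image f) ` P"
    then obtain C D where CD: "(C, D) \<in> P" "C' = edge_image f C" "D' = edge_image f D" by auto
    have "is_8cycle V C" "is_8cycle V D" "\<Union>D = \<Union>C" "C \<inter> D = {}"
      using paired_decomposition_cycle[OF P CD(1)] paired_decomposition_inside[OF P CD(1)]
      unfolding inside_8cycle_def by auto
    then show "is_8cycle X C' \<and> inside_8cycle X C' D'"
      unfolding inside_8cycle_def CD(2,3)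
      using is_8cycle_edge_image[OF _ f] edge_image_Int[OF f(1) Pow[OF CD(1)]]
      by (simp add: Union_edge_image) (simp add: edge_image_def)
  next
    fix p' q' assume "p' \<in> map_prod (edge_image f) (edge_image f) ` P"
      "q' \<in> map_prod (edge_image f) (edge_image f) ` P" "p' \<noteq> q'"
    then obtain C D C2 D2 where CD: "(C, D) \<in> P" "(C2, D2) \<in> P"
      and p': "p' = (edge_image f C, edge_image f D)" and q': "q' = (edge_image f C2, edge_image f D2)"
      by auto
    then have "C \<inter> C2 = {} \<and> D \<inter> D2 = {}"
      using paired_decomposition_disjoint[OF P CD] \<open>p' \<noteq> q'\<close> by auto
    then show "fst p' \<inter> fst q' = {} \<and> snd p' \<inter> snd q' = {}"
      unfolding p' q' using edge_image_Int[OF f(1)] Pow[OF CD(1)] Pow[OF CD(2)]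
      by (simp add: edge_image_def)
  next
    have "fst ` map_prod (edge_image f) (edge_image f) ` P = edge_image f ` fst ` P"
      "snd ` map_prod (edge_image f) (edge_image f) ` P = edge_image f ` snd ` P"
      by (simp_all add: image_image)
    then show "\<Union>(fst ` map_prod (edge_image f) (edge_image f) ` P) = edge_image f E"
      "\<Union>(snd ` map_prod (edge_image f) (edge_image f) ` P) = edge_image f E"
      by (simp_all only: paired_decomposition_Union_fst[OF P] paired_decomposition_Union_snd[OF P]
          flip: edge_image_Union)
  qed
qed

lemma almost_2_perfect_if_paired_decomposition:
  assumes P: "paired_decomposition X P (complete_edges X - L)" and L: "L \<subseteq> complete_edges X"
  shows "almost_2_perfect X (fst ` P) L"
proof -
  have "inj_on fst P"
  proof (rule inj_onI)
    fix p q assume "p \<in> P" "q \<in> P" "fst p = fst q"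
    moreover have "fst p \<noteq> {}"
      using paired_decomposition_cycle[OF P] \<open>p \<in> P\<close> is_8cycle_nonempty
      by (metis prod.collapse)
    ultimately show "p = q" using paired_decomposition_disjoint[OF P] by blast
  qed
  define g where "g = snd \<circ> inv_into P fst"
  have g: "g (fst p) = snd p" if "p \<in> P" for p
    using \<open>inj_on fst P\<close> that by (simp add: g_def)
  have packing: "is_8cycle_packing X (\<pi> ` P) L" if "\<pi> = fst \<or> \<pi> = snd" for \<pi>
    unfolding is_8cycle_packing_def
  proof (intro conjI ballI impI)
    show "is_8cycle X C" if "C \<in> \<pi> ` P" for C
      using \<open>\<pi> = fst \<or> \<pi> = snd\<close> that paired_decomposition_cycle[OF P]
        paired_decomposition_inside[OF P] unfolding inside_8cycle_def by auto
    show "C1 \<inter> C2 = {}" if "C1 \<in> \<pi> ` P" "C2 \<in> \<pi> ` P" "C1 \<noteq> C2" for C1 C2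
      using \<open>\<pi> = fst \<or> \<pi> = snd\<close> that paired_decomposition_disjoint[OF P] by blast
    show "L = complete_edges X - \<Union>(\<pi> ` P)"
      using \<open>\<pi> = fst \<or> \<pi> = snd\<close> paired_decomposition_Union_fst[OF P]
        paired_decomposition_Union_snd[OF P] L by auto
  qed
  have "g ` fst ` P = snd ` P" using g by (force simp: image_image)
  moreover have "inside_8cycle X C (g C)" if "C \<in> fst ` P" for C
    using that g paired_decomposition_inside[OF P] by force
  ultimately show ?thesis
    unfolding almost_2_perfect_def using packing by metis
qed

definition template_pairs :: "(nat list \<times> nat list) list \<Rightarrow> (nat set set \<times> nat set set) set" where
  "template_pairs T = map_prod cycle_edges cycle_edges ` set T"

definition template_edges :: "(nat list \<times> nat list) list \<Rightarrow> nat set set" where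
  "template_edges T = \<Union>((cycle_edges \<circ> fst) ` set T)"

definition template_ok :: "nat \<Rightarrow> (nat list \<times> nat list) list \<Rightarrow> bool" where
  "template_ok N T \<longleftrightarrow>
     (\<forall>(v, w)\<in>set T. length v = 8 \<and> distinct v \<and> (\<forall>x\<in>set v. x < N) \<and>
        length w = 8 \<and> distinct w \<and> set w = set v \<and> cycle_edges v \<inter> cycle_edges w = {}) \<and>
     (\<forall>p\<in>set T. \<forall>q\<in>set T. p \<noteq> q \<longrightarrow>
        cycle_edges (fst p) \<inter> cycle_edges (fst q) = {} \<and>
        cycle_edges (snd p) \<inter> cycle_edges (snd q) = {}) \<and>
     \<Union>((cycle_edges \<circ> snd) ` set T) = \<Union>((cycle_edges \<circ> fst) ` set T)"

lemma paired_decomposition_template: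
  assumes T: "template_ok N T"
  shows "paired_decomposition {..<N} (template_pairs T) (template_edges T)"
proof (rule paired_decompositionI)
  fix C D assume "(C, D) \<in> template_pairs T"
  then obtain v w where vw: "(v, w) \<in> set T" "C = cycle_edges v" "D = cycle_edges w"
    unfolding template_pairs_def by auto
  then have v: "length v = 8" "distinct v" "set v \<subseteq> {..<N}"
    and w: "length w = 8" "distinct w" "set w = set v" and disj: "C \<inter> D = {}"
    using T unfolding template_ok_def by fastforce+
  have "\<Union>D = \<Union>C" using v(1) w vw(2,3) by (simp add: Union_cycle_edges flip: length_0_conv)
  with v w vw(2,3) disj show "is_8cycle {..<N} C \<and> inside_8cycle {..<N} C D"
    unfolding inside_8cycle_def is_8cycle_def by auto
next
  fix p q assume "p \<in> template_pairs T" "q \<in> template_pairs T" "p \<noteq> q"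
  then obtain p0 q0 where pq0: "p0 \<in> set T" "q0 \<in> set T"
    "p = map_prod cycle_edges cycle_edges p0" "q = map_prod cycle_edges cycle_edges q0"
    unfolding template_pairs_def by (meson imageE)
  moreover have "p0 \<noteq> q0" using pq0 \<open>p \<noteq> q\<close> by blast
  ultimately show "fst p \<inter> fst q = {} \<and> snd p \<inter> snd q = {}"
    using T unfolding template_ok_def by (simp add: map_prod_def split_beta)
next
  show "\<Union>(fst ` template_pairs T) = template_edges T" "\<Union>(snd ` template_pairs T) = template_edges T"
    using T unfolding template_pairs_def template_edges_def template_ok_def
    by (simp_all add: image_image comp_def)
qed

lemma set_edge_list:
  "set [{x, y}. x \<leftarrow> [0..<N], y \<leftarrow> [Suc x..<N], P x y] = {{x, y} | x y. x < y \<and> y < N \<and> P x y}"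
  by (auto simp: set_concat) force+

definition K8_template :: "(nat list \<times> nat list) list" where
  "K8_template =
     [([0, 2, 1, 3, 4, 6, 5, 7], [0, 3, 5, 1, 6, 2, 7, 4]),
      ([0, 3, 5, 1, 6, 2, 7, 4], [0, 5, 2, 4, 1, 7, 3, 6]),
      ([0, 5, 2, 4, 1, 7, 3, 6], [0, 2, 1, 3, 4, 6, 5, 7])]"

definition K10_template :: "(nat list \<times> nat list) list" where
  "K10_template =
     [([0, 6, 8, 4, 7, 3, 5, 2], [0, 4, 2, 6, 3, 8, 7, 5]),
      ([0, 3, 8, 5, 9, 1, 6, 4], [0, 8, 6, 5, 1, 4, 3, 9]),
      ([0, 5, 1, 3, 4, 2, 7, 9], [0, 3, 5, 2, 1, 9, 4, 7]),
      ([0, 8, 1, 2, 9, 6, 5, 7], [0, 6, 1, 7, 9, 5, 8, 2]),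
      ([1, 4, 9, 3, 6, 2, 8, 7], [1, 8, 4, 6, 9, 2, 7, 3])]"

definition K44_template :: "(nat list \<times> nat list) list" where
  "K44_template =
     [([0, 4, 1, 5, 2, 6, 3, 7], [0, 5, 3, 4, 2, 7, 1, 6]),
      ([0, 5, 3, 4, 2, 7, 1, 6], [0, 4, 1, 5, 2, 6, 3, 7])]"

lemma template_ok_K8: "template_ok 8 K8_template"
  unfolding template_ok_def K8_template_def cycle_edges_conv_map by code_simp

lemma template_ok_K10: "template_ok 10 K10_template"
  unfolding template_ok_def K10_template_def cycle_edges_conv_map by code_simp

lemma template_ok_K44: "template_ok 8 K44_template"
  unfolding template_ok_def K44_template_def cycle_edges_conv_map by code_simp

lemma template_edges_K8:
  "template_edges K8_template = {{x, y} | x y. x < y \<and> y < 8 \<and> x div 2 \<noteq> y div 2}"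
proof -
  have "template_edges K8_template =
      set [{x, y}. x \<leftarrow> [0..<8], y \<leftarrow> [Suc x..<8], x div 2 \<noteq> y div 2]"
    unfolding template_edges_def K8_template_def cycle_edges_conv_map by code_simp
  then show ?thesis by (simp only: set_edge_list)
qed

lemma template_edges_K10:
  "template_edges K10_template = {{x, y} | x y. x < y \<and> y < 10 \<and> x div 2 \<noteq> y div 2}"
proof -
  have "template_edges K10_template =
      set [{x, y}. x \<leftarrow> [0..<10], y \<leftarrow> [Suc x..<10], x div 2 \<noteq> y div 2]"
    unfolding template_edges_def K10_template_def cycle_edges_conv_map by code_simp
  then show ?thesis by (simp only: set_edge_list)
qed

lemma template_edges_K44:
  "template_edges K44_template = {{x, y} | x y. x < y \<and> y < 8 \<and> x < 4 \<and> 4 \<le> y}"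
proof -
  have "template_edges K44_template =
      set [{x, y}. x \<leftarrow> [0..<8], y \<leftarrow> [Suc x..<8], x < 4 \<and> 4 \<le> y]"
    unfolding template_edges_def K44_template_def cycle_edges_conv_map by code_simp
  then show ?thesis by (simp only: set_edge_list)
qed

lemma doubleton_eq_ordered:
  "(u::'a::linorder) < v \<Longrightarrow> u' < v' \<Longrightarrow> {u, v} = {u', v'} \<Longrightarrow> u = u' \<and> v = v'"
  by (auto simp: doubleton_eq_iff)

lemma complete_edges_lessThan: "complete_edges {..<n::nat} = {{u, v} | u v. u < v \<and> v < n}"
proof (intro set_eqI iffI)
  fix e assume "e \<in> complete_edges {..<n}"
  then have e: "card e = 2" "e \<subseteq> {..<n}" unfolding complete_edges_def by auto
  then obtain x y where xy: "e = {x, y}" "x \<noteq> y" by (auto simp: card_2_iff)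
  show "e \<in> {{u, v} | u v. u < v \<and> v < n}"
  proof (cases "x < y")
    case True
    then show ?thesis using xy e by blast
  next
    case False
    then have "y < x" using xy by linarith
    then show ?thesis using xy e by (auto simp: insert_commute)
  qed
qed (auto simp: complete_edges_def)

definition pair_matching :: "nat \<Rightarrow> nat set set" where
  "pair_matching n = {{u, v} | u v. u < v \<and> v < n \<and> u div 2 = v div 2}"

lemma pair_matching_subset: "pair_matching n \<subseteq> complete_edges {..<n}"
  unfolding complete_edges_lessThan pair_matching_def by blast

lemma complete_edges_minus_pair_matching:
  "complete_edges {..<n} - pair_matching n = {{u, v} | u v. u < v \<and> v < n \<and> u div 2 \<noteq> v div 2}"
  unfolding complete_edges_lessThan pair_matching_def by (auto dest: doubleton_eq_ordered)

lemma card_pair_matching: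
  assumes "even n"
  shows "card (pair_matching n) = n div 2"
proof -
  have "pair_matching n = (\<lambda>k. {2 * k, 2 * k + 1}) ` {..<n div 2}"
  proof (intro set_eqI iffI)
    fix e assume "e \<in> pair_matching n"
    then obtain u v where uv: "e = {u, v}" "u < v" "v < n" "u div 2 = v div 2"
      unfolding pair_matching_def by blast
    define k where "k = u div 2"
    have "u = 2 * k" "v = 2 * k + 1" "k < n div 2"
      using uv(2-4) times_div_less_eq_dividend[of 2 u] dividend_less_times_div[of 2 u]
        times_div_less_eq_dividend[of 2 v] dividend_less_times_div[of 2 v]
        dividend_less_times_div[of 2 n] unfolding k_def by linarith+
    then show "e \<in> (\<lambda>k. {2 * k, 2 * k + 1}) ` {..<n div 2}" using uv(1) by blast
  next
    fix e assume "e \<in> (\<lambda>k. {2 * k, 2 * k + 1}) ` {..<n div 2}"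
    then obtain k where "e = {2 * k, 2 * k + 1}" "k < n div 2" by blast
    moreover have "2 * k + 1 < n" using \<open>k < n div 2\<close> assms by (auto elim!: evenE)
    ultimately show "e \<in> pair_matching n" unfolding pair_matching_def by fastforce
  qed
  moreover have "inj_on (\<lambda>k::nat. {2 * k, 2 * k + 1}) {..<n div 2}"
    by (auto simp: inj_on_def doubleton_eq_iff)
  ultimately show ?thesis by (simp add: card_image)
qed

text \<open>\<open>Inl i\<close> is the block of octet i, \<open>Inr (p, q)\<close> the K_(4,4) between quads p and q; an edge
  u < v goes to the octet of u unless v lies in another octet. As fibres of this map, the blocks
  are disjoint by construction.\<close>
definition block_index :: "nat \<Rightarrow> nat \<Rightarrow> nat \<Rightarrow> nat + nat \<times> nat" where
  "block_index m u v =
     (if u div 8 = v div 8 \<or> 8 * m \<le> v then Inl (u div 8) else Inr (u div 4, v div 4))"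

definition block_indices :: "nat \<Rightarrow> (nat + nat \<times> nat) set" where
  "block_indices m = Inl ` {..<m} \<union> Inr ` {(p, q). p < q \<and> q < 2 * m \<and> p div 2 \<noteq> q div 2}"

definition block_edges :: "nat \<Rightarrow> nat \<Rightarrow> nat + nat \<times> nat \<Rightarrow> nat set set" where
  "block_edges n m b =
     {{u, v} | u v. u < v \<and> v < n \<and> u div 2 \<noteq> v div 2 \<and> block_index m u v = b}"

lemma disjoint_family_block_edges: "disjoint_family (block_edges n m)"
  unfolding disjoint_family_on_def block_edges_def by (auto dest: doubleton_eq_ordered)

lemma block_index_in_block_indices:
  assumes n: "n \<le> 8 * m + 2" and uv: "u < v" "v < n" "u div 2 \<noteq> v div 2"
  shows "block_index m u v \<in> block_indices m"
proof -
  have "u < 8 * m"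
  proof (rule ccontr)
    assume "\<not> u < 8 * m"
    then have "u = 8 * m" "v = 8 * m + 1" using n uv(1,2) by linarith+
    then show False using uv(3) by simp
  qed
  show ?thesis
  proof (cases "u div 8 = v div 8 \<or> 8 * m \<le> v")
    case True
    moreover have "u div 8 < m" using \<open>u < 8 * m\<close> by (simp add: div_less_iff_less_mult)
    ultimately show ?thesis unfolding block_index_def block_indices_def by simp
  next
    case False
    have div8: "x div 8 = x div 4 div 2" for x :: nat by (simp add: div_mult2_eq[symmetric])
    have "u div 4 \<le> v div 4" using uv(1) by (simp add: div_le_mono)
    moreover have "u div 4 \<noteq> v div 4" using False div8 by metis
    moreover have "v div 4 < 2 * m" using False by (simp add: div_less_iff_less_mult)
    ultimately show ?thesis using False div8 unfolding block_index_def block_indices_def by auto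
  qed
qed

lemma UN_block_edges:
  assumes "n \<le> 8 * m + 2"
  shows "(\<Union>b\<in>block_indices m. block_edges n m b) = complete_edges {..<n} - pair_matching n"
  unfolding complete_edges_minus_pair_matching block_edges_def
  using block_index_in_block_indices[OF assms] by blast

definition quad_embedding :: "nat \<Rightarrow> nat \<Rightarrow> nat \<Rightarrow> nat" where
  "quad_embedding p q x = (if x < 4 then 4 * p + x else 4 * q + x - 4)"

definition octet_embedding :: "nat \<Rightarrow> nat \<Rightarrow> nat \<Rightarrow> nat" where
  "octet_embedding m i x = (if x < 8 then 8 * i + x else 8 * m + x - 8)"

lemma strict_mono_quad_embedding: "p < q \<Longrightarrow> strict_mono (quad_embedding p q)"
  unfolding strict_mono_def quad_embedding_def by auto

lemma strict_mono_octet_embedding: "i < m \<Longrightarrow> strict_mono (octet_embedding m i)"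
  unfolding strict_mono_def octet_embedding_def by auto

lemma octet_embedding_div2: "octet_embedding m i x div 2 = quad_embedding i m (x div 2)"
proof (cases "x < 8")
  case True
  moreover have "x div 2 < 4" using True by simp
  moreover have "(8 * i + x) div 2 = 4 * i + x div 2" by simp
  ultimately show ?thesis unfolding octet_embedding_def quad_embedding_def by simp
next
  case False
  define z where "z = x - 8"
  have "x = z + 8" using False unfolding z_def by linarith
  moreover have "(z + 8) div 2 = z div 2 + 4" "(8 * m + z) div 2 = 4 * m + z div 2" by simp_all
  ultimately show ?thesis unfolding octet_embedding_def quad_embedding_def by simp
qed

lemma octet_embedding_div2_eq_iff:
  "i < m \<Longrightarrow> octet_embedding m i x div 2 = octet_embedding m i y div 2 \<longleftrightarrow> x div 2 = y div 2"
  by (simp add: octet_embedding_div2 strict_mono_eq strict_mono_quad_embedding)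

lemma block_index_octet_embedding:
  assumes "i < m" "x < 8" "x < y"
  shows "block_index m (octet_embedding m i x) (octet_embedding m i y) = Inl i"
  using assms unfolding block_index_def octet_embedding_def by auto

lemma octet_embedding_surj:
  assumes "u < 8 * m + r" "u div 8 = i \<or> 8 * m \<le> u"
  obtains x where "x < 8 + r" "octet_embedding m i x = u"
proof (cases "u div 8 = i")
  case True
  then have "8 * i \<le> u" "u - 8 * i < 8"
    using times_div_less_eq_dividend[of 8 u] dividend_less_times_div[of 8 u] by linarith+
  with that[of "u - 8 * i"] show ?thesis by (simp add: octet_embedding_def)
next
  case False
  with assms have "8 * m \<le> u" by blast
  then have "u - 8 * m + 8 < 8 + r" "\<not> u - 8 * m + 8 < 8" "8 * m + (u - 8 * m + 8) - 8 = u"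
    using assms(1) by auto
  with that[of "u - 8 * m + 8"] show ?thesis unfolding octet_embedding_def by simp
qed

lemma octet_embedding_edge_in_block_edges:
  assumes n: "n = 8 * m + r" and r: "r \<le> 2" and i: "i < m"
    and xy: "x < y" "y < 8 + r" "x div 2 \<noteq> y div 2"
  shows "{octet_embedding m i x, octet_embedding m i y} \<in> block_edges n m (Inl i)"
proof -
  have "x < 8"
  proof (rule ccontr)
    assume "\<not> x < 8"
    then have "x = 8" "y = 9" using xy(1,2) r by linarith+
    then show False using xy(3) by simp
  qed
  moreover have "octet_embedding m i y < n" using xy(2) i n unfolding octet_embedding_def by auto
  ultimately show ?thesis
    using xy strict_mono_octet_embedding[OF i] block_index_octet_embedding[OF i]
      octet_embedding_div2_eq_iff[OF i]
    unfolding block_edges_def strict_mono_def by blast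
qed

lemma edge_image_octet_embedding:
  assumes n: "n = 8 * m + r" and r: "r \<le> 2" and i: "i < m"
  shows "edge_image (octet_embedding m i) {{x, y} | x y. x < y \<and> y < 8 + r \<and> x div 2 \<noteq> y div 2}
    = block_edges n m (Inl i)"
proof -
  let ?f = "octet_embedding m i"
  have "{{?f x, ?f y} | x y. x < y \<and> y < 8 + r \<and> x div 2 \<noteq> y div 2} = block_edges n m (Inl i)"
  proof (intro set_eqI iffI)
    fix e assume "e \<in> {{?f x, ?f y} | x y. x < y \<and> y < 8 + r \<and> x div 2 \<noteq> y div 2}"
    then show "e \<in> block_edges n m (Inl i)"
      using octet_embedding_edge_in_block_edges[OF n r i] by blast
  next
    fix e assume "e \<in> block_edges n m (Inl i)"
    then obtain u v where uv: "e = {u, v}" "u < v" "v < n" "u div 2 \<noteq> v div 2"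
      and b: "block_index m u v = Inl i" unfolding block_edges_def by blast
    from b have "u div 8 = i" "v div 8 = i \<or> 8 * m \<le> v"
      unfolding block_index_def by (auto split: if_splits)
    moreover have "u < n" using uv by simp
    ultimately obtain x y where x: "x < 8 + r" "?f x = u" and y: "y < 8 + r" "?f y = v"
      using octet_embedding_surj[of u m r i] octet_embedding_surj[of v m r i] uv(3) n by metis
    have "x < y" using uv(2) x(2) y(2) strict_mono_octet_embedding[OF i]
      by (metis linorder_neqE_nat strict_mono_less less_asym)
    moreover have "x div 2 \<noteq> y div 2"
      using uv(4) octet_embedding_div2_eq_iff[OF i, of x y] unfolding x(2) y(2) by simp
    ultimately show "e \<in> {{?f x, ?f y} | x y. x < y \<and> y < 8 + r \<and> x div 2 \<noteq> y div 2}"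
      using uv(1) x y by blast
  qed
  then show ?thesis by (simp only: edge_image_doubletons)
qed

lemma quad_embedding_edge_in_block_edges:
  assumes n: "8 * m \<le> n" and pq: "p < q" "q < 2 * m" "p div 2 \<noteq> q div 2"
    and xy: "x < 4" "4 \<le> y" "y < 8"
  shows "{quad_embedding p q x, quad_embedding p q y} \<in> block_edges n m (Inr (p, q))"
proof -
  let ?g = "quad_embedding p q"
  have div8: "k div 8 = k div 4 div 2" "k div 8 = k div 2 div 4" for k :: nat
    by (simp_all add: div_mult2_eq[symmetric])
  define z where "z = y - 4"
  have z: "y = z + 4" "z < 4" using xy(2,3) unfolding z_def by linarith+
  have gx: "?g x = 4 * p + x" and gy: "?g y = 4 * q + z"
    using xy(1) z(1) unfolding quad_embedding_def by auto
  then have div4: "?g x div 4 = p" "?g y div 4 = q" using xy(1) z(2) by simp_all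
  have "?g x < ?g y" using strict_mono_quad_embedding[OF pq(1)] xy by (simp add: strict_mono_less)
  moreover have "?g y < 8 * m" using gy z(2) pq(2) by linarith
  moreover have "block_index m (?g x) (?g y) = Inr (p, q)"
    using div4 \<open>?g y < 8 * m\<close> pq(3) unfolding block_index_def by (simp add: div8(1))
  moreover have "?g x div 2 \<noteq> ?g y div 2"
  proof
    assume "?g x div 2 = ?g y div 2"
    then have "?g x div 8 = ?g y div 8" using div8(2) by metis
    with div4 pq(3) div8(1) show False by metis
  qed
  ultimately show ?thesis using n unfolding block_edges_def by fastforce
qed

lemma edge_image_quad_embedding:
  assumes n: "8 * m \<le> n" and pq: "p < q" "q < 2 * m" "p div 2 \<noteq> q div 2"
  shows "edge_image (quad_embedding p q) {{x, y} | x y. x < y \<and> y < 8 \<and> x < 4 \<and> 4 \<le> y}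
    = block_edges n m (Inr (p, q))"
proof -
  let ?g = "quad_embedding p q"
  have "{{?g x, ?g y} | x y. x < y \<and> y < 8 \<and> x < 4 \<and> 4 \<le> y} = block_edges n m (Inr (p, q))"
  proof (intro set_eqI iffI)
    fix e assume "e \<in> {{?g x, ?g y} | x y. x < y \<and> y < 8 \<and> x < 4 \<and> 4 \<le> y}"
    then show "e \<in> block_edges n m (Inr (p, q))"
      using quad_embedding_edge_in_block_edges[OF n pq] by blast
  next
    fix e assume "e \<in> block_edges n m (Inr (p, q))"
    then obtain u v where uv: "e = {u, v}" and b: "block_index m u v = Inr (p, q)"
      unfolding block_edges_def by blast
    from b have "u div 4 = p" "v div 4 = q" unfolding block_index_def by (auto split: if_splits)
    then have "4 * p \<le> u" "u < 4 * p + 4" "4 * q \<le> v" "v < 4 * q + 4"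
      using times_div_less_eq_dividend[of 4 u] dividend_less_times_div[of 4 u]
        times_div_less_eq_dividend[of 4 v] dividend_less_times_div[of 4 v] by linarith+
    then have "?g (u - 4 * p) = u" "?g (v - 4 * q + 4) = v" "u - 4 * p < v - 4 * q + 4"
      "v - 4 * q + 4 < 8" "u - 4 * p < 4" "4 \<le> v - 4 * q + 4"
      unfolding quad_embedding_def by auto
    then show "e \<in> {{?g x, ?g y} | x y. x < y \<and> y < 8 \<and> x < 4 \<and> 4 \<le> y}"
      unfolding uv(1) by (intro CollectI exI[of _ "u - 4 * p"] exI[of _ "v - 4 * q + 4"]) simp
  qed
  then show ?thesis by (simp only: edge_image_doubletons)
qed

lemma paired_decomposition_octet_block:
  assumes n: "n = 8 * m + r" and r: "r \<le> 2" and i: "i < m" and T: "template_ok (8 + r) T"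
    and E: "template_edges T = {{x, y} | x y. x < y \<and> y < 8 + r \<and> x div 2 \<noteq> y div 2}"
  shows "\<exists>P. paired_decomposition {..<n} P (block_edges n m (Inl i))"
proof -
  let ?f = "octet_embedding m i"
  have "inj_on ?f {..<8 + r}"
    using strict_mono_octet_embedding[OF i] by (rule strict_mono_imp_inj_on)
  moreover have "?f ` {..<8 + r} \<subseteq> {..<n}"
    using i n unfolding octet_embedding_def by auto
  ultimately have "paired_decomposition {..<n} (map_prod (edge_image ?f) (edge_image ?f) ` template_pairs T)
      (edge_image ?f (template_edges T))"
    by (rule paired_decomposition_edge_image[OF paired_decomposition_template[OF T]])
  then show ?thesis unfolding E edge_image_octet_embedding[OF n r i] by (rule exI)
qed

lemma paired_decomposition_quad_block:
  assumes n: "8 * m \<le> n" and pq: "p < q" "q < 2 * m" "p div 2 \<noteq> q div 2"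
  shows "\<exists>P. paired_decomposition {..<n} P (block_edges n m (Inr (p, q)))"
proof -
  let ?g = "quad_embedding p q"
  have "inj_on ?g {..<8}"
    using strict_mono_quad_embedding[OF pq(1)] by (rule strict_mono_imp_inj_on)
  moreover have "?g ` {..<8} \<subseteq> {..<n}"
    using pq n unfolding quad_embedding_def by auto
  ultimately have "paired_decomposition {..<n}
      (map_prod (edge_image ?g) (edge_image ?g) ` template_pairs K44_template)
      (edge_image ?g (template_edges K44_template))"
    by (rule paired_decomposition_edge_image[OF paired_decomposition_template[OF template_ok_K44]])
  then show ?thesis unfolding template_edges_K44 edge_image_quad_embedding[OF n pq] by (rule exI)
qed

lemma paired_decomposition_block:
  assumes n: "n = 8 * m + r" and r: "r = 0 \<or> r = 2" and b: "b \<in> block_indices m"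
  shows "\<exists>P. paired_decomposition {..<n} P (block_edges n m b)"
proof (cases b)
  case (Inl i)
  then have i: "i < m" using b unfolding block_indices_def by auto
  from r show ?thesis
  proof
    assume "r = 0"
    then show ?thesis using paired_decomposition_octet_block[OF n _ i] template_ok_K8 template_edges_K8
      unfolding Inl by simp
  next
    assume "r = 2"
    then show ?thesis using paired_decomposition_octet_block[OF n _ i] template_ok_K10 template_edges_K10
      unfolding Inl by simp
  qed
next
  case (Inr pq)
  then obtain p q where "b = Inr (p, q)" "p < q" "q < 2 * m" "p div 2 \<noteq> q div 2"
    using b unfolding block_indices_def by auto
  moreover have "8 * m \<le> n" using n by simp
  ultimately show ?thesis using paired_decomposition_quad_block by blast
qed

lemma almost_2_perfect_pair_matching:
  assumes "n mod 8 = 0 \<or> n mod 8 = 2"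
  shows "\<exists>Cs. almost_2_perfect {..<n} Cs (pair_matching n)"
proof -
  define m where "m = n div 8"
  have n: "n = 8 * m + n mod 8" unfolding m_def by simp
  have "\<forall>b\<in>block_indices m. \<exists>P. paired_decomposition {..<n} P (block_edges n m b)"
    using paired_decomposition_block[OF n assms] by blast
  then obtain P where P: "\<And>b. b \<in> block_indices m \<Longrightarrow> paired_decomposition {..<n} (P b) (block_edges n m b)"
    by (metis bchoice)
  have "n \<le> 8 * m + 2" using n assms by linarith
  have "paired_decomposition {..<n} (\<Union>b\<in>block_indices m. P b) (\<Union>b\<in>block_indices m. block_edges n m b)"
    using P disjoint_family_on_mono[OF subset_UNIV disjoint_family_block_edges]
    by (rule paired_decomposition_UN)
  then have "paired_decomposition {..<n} (\<Union>b\<in>block_indices m. P b) (complete_edges {..<n} - pair_matching n)"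
    by (simp only: UN_block_edges[OF \<open>n \<le> 8 * m + 2\<close>])
  then show ?thesis using almost_2_perfect_if_paired_decomposition pair_matching_subset by blast
qed

lemma is_maximum_8cycle_packingI:
  assumes P: "is_8cycle_packing X Cs L" and X: "finite X" "even (card X)" and L: "2 * card L = card X"
  shows "is_maximum_8cycle_packing X Cs L"
  unfolding is_maximum_8cycle_packing_def
proof (intro conjI P allI impI)
  fix Cs' L' assume "is_8cycle_packing X Cs' L'"
  then have "card X \<le> 2 * card L'" using X by (rule card_le_twice_card_leave)
  with L show "card L \<le> card L'" by linarith
qed

theorem lemma3p9:
  fixes n :: nat
  assumes "n \<ge> 8" and "n mod 16 \<in> {0, 2, 8, 10}"
  shows "\<exists>Cs L. is_maximum_8cycle_packing {..<n} Cs L \<and> almost_2_perfect {..<n} Cs L"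
proof -
  have "n mod 8 = n mod 16 mod 8" using mod_mod_cancel[of 8 16 n] by simp
  then have n8: "n mod 8 = 0 \<or> n mod 8 = 2" using assms(2) by auto
  then have "even n" using mod_mod_cancel[of 2 8 n] by auto
  obtain Cs where A: "almost_2_perfect {..<n} Cs (pair_matching n)"
    using almost_2_perfect_pair_matching[OF n8] by blast
  have "is_maximum_8cycle_packing {..<n} Cs (pair_matching n)"
  proof (rule is_maximum_8cycle_packingI)
    show "is_8cycle_packing {..<n} Cs (pair_matching n)" using A unfolding almost_2_perfect_def by blast
    show "2 * card (pair_matching n) = card {..<n}"
      using card_pair_matching[OF \<open>even n\<close>] \<open>even n\<close> by simp
  qed (use \<open>even n\<close> in simp_all)
  with A show ?thesis by blast
qed

end
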